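(* Let $G=(\Gamma,s)$ be a connected rooted graph and $p\in\mathrm{PF}(G)$. Define $V_M(p)=\{v\in\tilde V: p(v)\le\mathrm{mult}(vs)\}$ and, for $v\in\tilde V$, $p^{v+}=p+\sum_{w\in\tilde V\setminus\{v\}}\mathrm{mult}(ws)\mathbf 1_w$. Then $p$ is prime if and only if $p^{v+}\in\mathrm{PF}(G)$ for every $v\in V_M(p)$.
   Context: $\mathbb{N}=\{1,2,\dots\}$. A rooted graph $G=(\Gamma,s)$ is a finite undirected multigraph without loops with a distinguished vertex $s$ (the sink); $V$ is its vertex set, $\tilde V=V\setminus\{s\}$. $\mathrm{mult}(vw)$ is the number of edges between $v,w$; $\deg^A(v)=\sum_{w\in A}\mathrm{mult}(vw)$ for $A\subseteq V$. $\mathbf 1_w$ is the indicator function of $w$. A $G$-parking function is $p:\tilde V\to\mathbb{N}$ such that for every nonempty $S\subseteq\tilde V$ there is $v\in S$ with $p(v)\le\deg^{V\setminus S}(v)$; $\mathrm{PF}(G)$ is their set (the same definition is used for possibly disconnected rooted graphs). For $A\subseteq\tilde V$, $G^A$ is the induced subgraph on $A\cup\{s\}$ rooted at $s$. For an ordered pair $(A,B)$ of nonempty disjoint sets with $A\cup B=\tilde V$ and $p\in\mathrm{PF}(G)$, $p^A(v)=p(v)$ ($v\in A$) and $p^B(v)=p(v)-\deg^A(v)$ ($v\in B$); $p$ is decomposable w.r.t. $(A,B)$ if $p^A\in\mathrm{PF}(G^A)$ and $p^B\in\mathrm{PF}(G^B)$; $p$ is prime if it is decomposable w.r.t. no such $(A,B)$.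 *)

theory Defs
  imports Main
begin

text \<open>A rooted multigraph: finite vertex set V, sink s \<in> V, edge multiplicities
  mult :: 'a => 'a => nat (symmetric, no loops). Only values on V matter.\<close>

definition rooted_graph :: "'a set \<Rightarrow> 'a \<Rightarrow> ('a \<Rightarrow> 'a \<Rightarrow> nat) \<Rightarrow> bool" where
  "rooted_graph V s mult \<longleftrightarrow> finite V \<and> s \<in> V \<and>
     (\<forall>v\<in>V. \<forall>w\<in>V. mult v w = mult w v) \<and> (\<forall>v\<in>V. mult v v = 0)"

definition connected_graph :: "'a set \<Rightarrow> ('a \<Rightarrow> 'a \<Rightarrow> nat) \<Rightarrow> bool" where
  "connected_graph V mult \<longleftrightarrow>
     (\<forall>v\<in>V. \<forall>w\<in>V. (\<lambda>x y. x \<in> V \<and> y \<in> V \<and> 0 < mult x y)\<^sup>*\<^sup>* v w)"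

definition deg :: "('a \<Rightarrow> 'a \<Rightarrow> nat) \<Rightarrow> 'a set \<Rightarrow> 'a \<Rightarrow> nat" where
  "deg mult A v = (\<Sum>w\<in>A. mult v w)"

text \<open>G-parking functions of the rooted graph with vertex set V (sink s); only the
  values of p on V - {s} matter; values in \<nat> = {1,2,...}.\<close>
definition is_PF :: "'a set \<Rightarrow> 'a \<Rightarrow> ('a \<Rightarrow> 'a \<Rightarrow> nat) \<Rightarrow> ('a \<Rightarrow> int) \<Rightarrow> bool" where
  "is_PF V s mult p \<longleftrightarrow> (\<forall>v\<in>V - {s}. 1 \<le> p v) \<and>
     (\<forall>S. S \<subseteq> V - {s} \<and> S \<noteq> {} \<longrightarrow> (\<exists>v\<in>S. p v \<le> int (deg mult (V - S) v)))"

text \<open>Decomposability w.r.t. (A,B): p^A is a PF of G^A (induced on A \<union> {s}),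
  p^B = p - deg^A is a PF of G^B (induced on B \<union> {s}).\<close>
definition decomposable :: "'a set \<Rightarrow> 'a \<Rightarrow> ('a \<Rightarrow> 'a \<Rightarrow> nat) \<Rightarrow> ('a \<Rightarrow> int)
    \<Rightarrow> 'a set \<Rightarrow> 'a set \<Rightarrow> bool" where
  "decomposable V s mult p A B \<longleftrightarrow>
     is_PF (A \<union> {s}) s mult p \<and>
     is_PF (B \<union> {s}) s mult (\<lambda>v. p v - int (deg mult A v))"

definition prime_PF :: "'a set \<Rightarrow> 'a \<Rightarrow> ('a \<Rightarrow> 'a \<Rightarrow> nat) \<Rightarrow> ('a \<Rightarrow> int) \<Rightarrow> bool" where
  "prime_PF V s mult p \<longleftrightarrow>
     \<not> (\<exists>A B. A \<noteq> {} \<and> B \<noteq> {} \<and> A \<inter> B = {} \<and> A \<union> B = V - {s} \<and>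
            decomposable V s mult p A B)"

definition VM :: "'a set \<Rightarrow> 'a \<Rightarrow> ('a \<Rightarrow> 'a \<Rightarrow> nat) \<Rightarrow> ('a \<Rightarrow> int) \<Rightarrow> 'a set" where
  "VM V s mult p = {v \<in> V - {s}. p v \<le> int (mult v s)}"

definition plus_shift :: "'a set \<Rightarrow> 'a \<Rightarrow> ('a \<Rightarrow> 'a \<Rightarrow> nat) \<Rightarrow> ('a \<Rightarrow> int) \<Rightarrow> 'a \<Rightarrow> ('a \<Rightarrow> int)" where
  "plus_shift V s mult p v = (\<lambda>w. p w + (if w \<in> V - {s} - {v} then int (mult w s) else 0))"

end

theory Submission
  imports Defs
begin

text \<open>
  \<open>p\<close> fails to be a parking function exactly when some nonempty set \<open>S\<close> of non-sink
  vertices is blocking, i.e. \<open>deg\<^sup>V\<^sup>-\<^sup>S(w) < p(w)\<close> for all \<open>w \<in> S\<close>; blocking sets are closed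
  under unions. If \<open>p\<close> decomposes along \<open>(A, B)\<close>, then \<open>p\<^sup>A\<close> yields some \<open>v \<in> A\<close> in \<open>V\<^sub>M(p)\<close>,
  and positivity of \<open>p\<^sup>B\<close> says precisely that \<open>B\<close> is blocking for \<open>p\<^sup>v\<^sup>+\<close>. Conversely, if
  \<open>p\<^sup>v\<^sup>+\<close> is not a parking function, its largest blocking set \<open>U\<close> avoids \<open>v\<close>, and maximality
  of \<open>U\<close> makes \<open>p\<close> decomposable along \<open>(V - {s} - U, U)\<close>.
\<close>

lemma deg_mono:
  assumes "finite Y" "X \<subseteq> Y"
  shows "deg m X v \<le> deg m Y v"
  unfolding deg_def using assms by (simp add: sum_mono2)

lemma deg_Un_disjoint:
  assumes "finite X" "finite Y" "X \<inter> Y = {}"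
  shows "deg m (X \<union> Y) v = deg m X v + deg m Y v"
  unfolding deg_def using assms by (simp add: sum.union_disjoint)

lemma deg_insert:
  assumes "finite A" "s \<notin> A"
  shows "deg m (insert s A) v = deg m A v + m v s"
  using assms by (simp add: deg_def)

lemma deg_singleton: "deg m {s} v = m v s"
  by (simp add: deg_def)

definition blocking_set :: "'a set \<Rightarrow> 'a \<Rightarrow> ('a \<Rightarrow> 'a \<Rightarrow> nat) \<Rightarrow> ('a \<Rightarrow> int) \<Rightarrow> 'a set \<Rightarrow> bool" where
  "blocking_set V s m p S \<longleftrightarrow> S \<subseteq> V - {s} \<and> (\<forall>w\<in>S. int (deg m (V - S) w) < p w)"

definition max_blocking_set :: "'a set \<Rightarrow> 'a \<Rightarrow> ('a \<Rightarrow> 'a \<Rightarrow> nat) \<Rightarrow> ('a \<Rightarrow> int) \<Rightarrow> 'a set" where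
  "max_blocking_set V s m p = \<Union>{S. blocking_set V s m p S}"

lemma is_PF_iff_no_blocking_set:
  "is_PF V s m p \<longleftrightarrow>
     (\<forall>w\<in>V - {s}. 1 \<le> p w) \<and> (\<forall>S. blocking_set V s m p S \<longrightarrow> S = {})"
  unfolding is_PF_def blocking_set_def not_le[symmetric] by blast

lemma blocking_set_Union:
  assumes "finite V" "\<And>S. S \<in> \<S> \<Longrightarrow> blocking_set V s m p S"
  shows "blocking_set V s m p (\<Union>\<S>)"
  unfolding blocking_set_def
proof (intro conjI ballI)
  show "\<Union>\<S> \<subseteq> V - {s}" using assms(2) by (auto simp: blocking_set_def)
next
  fix w assume "w \<in> \<Union>\<S>"
  then obtain S where S: "S \<in> \<S>" "w \<in> S" by blast
  have "deg m (V - \<Union>\<S>) w \<le> deg m (V - S) w"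
    using assms(1) S(1) by (intro deg_mono) auto
  with assms(2)[OF S(1)] S(2) show "int (deg m (V - \<Union>\<S>) w) < p w"
    unfolding blocking_set_def by force
qed

lemma blocking_set_max_blocking_set:
  "finite V \<Longrightarrow> blocking_set V s m p (max_blocking_set V s m p)"
  unfolding max_blocking_set_def by (rule blocking_set_Union) auto

lemma blocking_set_subset_max_blocking_set:
  "blocking_set V s m p S \<Longrightarrow> S \<subseteq> max_blocking_set V s m p"
  unfolding max_blocking_set_def by blast

lemma is_PF_antimono:
  assumes "is_PF W s m q" "\<And>w. w \<in> W - {s} \<Longrightarrow> 1 \<le> p w \<and> p w \<le> q w"
  shows "is_PF W s m p"
  using assms unfolding is_PF_def by (meson order_trans subset_iff)

lemma is_PF_sink_neighbour:
  assumes "is_PF (A \<union> {s}) s m p" "s \<notin> A" "A \<noteq> {}"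
  obtains v where "v \<in> A" "p v \<le> int (m v s)"
proof -
  have "A \<subseteq> A \<union> {s} - {s}" using assms(2) by auto
  then obtain v where "v \<in> A" "p v \<le> int (deg m (A \<union> {s} - A) v)"
    using assms(1,3) unfolding is_PF_def by blast
  moreover have "A \<union> {s} - A = {s}" using assms(2) by auto
  ultimately show thesis using that by (simp add: deg_singleton)
qed

lemma is_PF_outside_max_blocking_set:
  fixes m :: "'a \<Rightarrow> 'a \<Rightarrow> nat"
  assumes "finite V" "s \<in> V" "\<And>w. w \<in> V - {s} \<Longrightarrow> 1 \<le> q w"
  defines "A \<equiv> V - {s} - max_blocking_set V s m q"
  shows "is_PF (A \<union> {s}) s m q"
  unfolding is_PF_def
proof (intro conjI allI impI ballI)
  fix w assume "w \<in> A \<union> {s} - {s}"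
  then show "1 \<le> q w" using assms(3) unfolding A_def by auto
next
  fix T assume T: "T \<subseteq> A \<union> {s} - {s} \<and> T \<noteq> {}"
  let ?U = "max_blocking_set V s m q"
  have U: "blocking_set V s m q ?U" using assms(1) by (rule blocking_set_max_blocking_set)
  show "\<exists>u\<in>T. q u \<le> int (deg m (A \<union> {s} - T) u)"
  proof (rule ccontr)
    assume "\<not> ?thesis"
    moreover have "s \<notin> ?U" using U unfolding blocking_set_def by auto
    then have "A \<union> {s} - T = V - (?U \<union> T)" using T assms(2) unfolding A_def by auto
    ultimately have T_high: "\<forall>u\<in>T. int (deg m (V - (?U \<union> T)) u) < q u" by (simp add: not_le)
    have "blocking_set V s m q (?U \<union> T)"
      unfolding blocking_set_def
    proof (intro conjI ballI)
      show "?U \<union> T \<subseteq> V - {s}" using U T unfolding blocking_set_def A_def by auto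
      fix u assume u: "u \<in> ?U \<union> T"
      show "int (deg m (V - (?U \<union> T)) u) < q u"
      proof (cases "u \<in> ?U")
        case True
        have "deg m (V - (?U \<union> T)) u \<le> deg m (V - ?U) u"
          using assms(1) by (intro deg_mono) auto
        with U True show ?thesis unfolding blocking_set_def by force
      qed (use u T_high in auto)
    qed
    then have "T \<subseteq> ?U" by (auto dest: blocking_set_subset_max_blocking_set)
    with T show False unfolding A_def by auto
  qed
qed

lemma is_PF_minus_deg:
  assumes "finite V" "s \<in> V" "is_PF V s m p"
    and "A \<inter> B = {}" "A \<union> B = V - {s}"
    and "\<And>w. w \<in> B \<Longrightarrow> int (deg m A w) < p w"
  shows "is_PF (B \<union> {s}) s m (\<lambda>w. p w - int (deg m A w))"
  unfolding is_PF_def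
proof (intro conjI allI impI ballI)
  fix w assume "w \<in> B \<union> {s} - {s}"
  then show "1 \<le> p w - int (deg m A w)" using assms(6) by force
next
  fix T assume T: "T \<subseteq> B \<union> {s} - {s} \<and> T \<noteq> {}"
  moreover have "T \<subseteq> V - {s}" using T assms(5) by auto
  ultimately obtain u where u: "u \<in> T" "p u \<le> int (deg m (V - T) u)"
    using assms(3) unfolding is_PF_def by blast
  have "V - T = A \<union> (B \<union> {s} - T)" using T assms(2,4,5) by auto
  moreover have "finite A" "finite (B \<union> {s} - T)"
    using assms(1,2,5) T by (auto intro: finite_subset)
  moreover have "A \<inter> (B \<union> {s} - T) = {}" using assms(4,5) by auto
  ultimately have "deg m (V - T) u = deg m A u + deg m (B \<union> {s} - T) u"
    by (simp add: deg_Un_disjoint)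
  with u show "\<exists>u\<in>T. p u - int (deg m A u) \<le> int (deg m (B \<union> {s} - T) u)" by force
qed

lemma plus_shift_not_PF_if_decomposable:
  assumes "finite V" "s \<in> V"
    and "A \<noteq> {}" "B \<noteq> {}" "A \<inter> B = {}" "A \<union> B = V - {s}"
    and "decomposable V s m p A B"
  obtains v where "v \<in> VM V s m p" "\<not> is_PF V s m (plus_shift V s m p v)"
proof -
  have PA: "is_PF (A \<union> {s}) s m p"
    and PB: "is_PF (B \<union> {s}) s m (\<lambda>w. p w - int (deg m A w))"
    using assms(7) unfolding decomposable_def by auto
  have sA: "s \<notin> A" and finA: "finite A" using assms(1,6) by (auto intro: finite_subset)
  obtain v where v: "v \<in> A" "p v \<le> int (m v s)"
    using PA sA assms(3) by (rule is_PF_sink_neighbour)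
  have "blocking_set V s m (plus_shift V s m p v) B"
    unfolding blocking_set_def
  proof (intro conjI ballI)
    show "B \<subseteq> V - {s}" using assms(6) by auto
    fix w assume w: "w \<in> B"
    have "V - B = A \<union> {s}" using assms(2,5,6) by auto
    then have "deg m (V - B) w = deg m A w + m w s" using finA sA by (simp add: deg_insert)
    moreover have "plus_shift V s m p v w = p w + int (m w s)"
      using w v(1) assms(5,6) unfolding plus_shift_def by auto
    moreover have "w \<in> B \<union> {s} - {s}" using w sA assms(5,6) by auto
    then have "1 \<le> p w - int (deg m A w)" using PB unfolding is_PF_def by blast
    ultimately show "int (deg m (V - B) w) < plus_shift V s m p v w" by simp
  qed
  then have "\<not> is_PF V s m (plus_shift V s m p v)"
    using assms(4) by (auto simp: is_PF_iff_no_blocking_set)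
  moreover have "v \<in> VM V s m p" using v assms(6) unfolding VM_def by auto
  ultimately show thesis using that by blast
qed

lemma decomposable_if_plus_shift_not_PF:
  assumes "finite V" "s \<in> V" "is_PF V s m p"
    and "v \<in> VM V s m p" "\<not> is_PF V s m (plus_shift V s m p v)"
  obtains A B where "A \<noteq> {}" "B \<noteq> {}" "A \<inter> B = {}" "A \<union> B = V - {s}"
    "decomposable V s m p A B"
proof -
  define q where "q = plus_shift V s m p v"
  define U where "U = max_blocking_set V s m q"
  define A where "A = V - {s} - U"
  have v: "v \<in> V - {s}" "p v \<le> int (m v s)" using assms(4) unfolding VM_def by auto
  have p_pos: "\<And>w. w \<in> V - {s} \<Longrightarrow> 1 \<le> p w" using assms(3) unfolding is_PF_def by auto
  have p_le_q: "\<And>w. p w \<le> q w" unfolding q_def plus_shift_def by auto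
  have U: "blocking_set V s m q U"
    unfolding U_def using assms(1) by (rule blocking_set_max_blocking_set)
  then have UV: "U \<subseteq> V - {s}" unfolding blocking_set_def by auto
  have "U \<noteq> {}"
  proof -
    obtain S where "blocking_set V s m q S" "S \<noteq> {}"
      using assms(5) p_pos p_le_q unfolding q_def[symmetric]
      by (meson is_PF_iff_no_blocking_set order_trans)
    then show ?thesis unfolding U_def by (metis blocking_set_subset_max_blocking_set subset_empty)
  qed
  have "v \<notin> U"
  proof
    assume "v \<in> U"
    have "m v s = deg m {s} v" by (simp add: deg_singleton)
    also have "\<dots> \<le> deg m (V - U) v" using assms(1,2) UV by (intro deg_mono) auto
    finally show False
      using U \<open>v \<in> U\<close> v(2) unfolding blocking_set_def q_def plus_shift_def by force
  qed
  have finA: "finite A" using assms(1) unfolding A_def by simp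
  have "is_PF (A \<union> {s}) s m p"
  proof (rule is_PF_antimono)
    show "is_PF (A \<union> {s}) s m q" unfolding A_def U_def
      using assms(1,2) p_pos p_le_q by (intro is_PF_outside_max_blocking_set) (auto intro: order_trans)
  qed (use p_pos p_le_q in \<open>auto simp: A_def\<close>)
  moreover have "is_PF (U \<union> {s}) s m (\<lambda>w. p w - int (deg m A w))"
  proof (rule is_PF_minus_deg[OF assms(1-3)])
    fix w assume w: "w \<in> U"
    have "V - U = A \<union> {s}" using assms(2) UV unfolding A_def by auto
    then have "deg m (V - U) w = deg m A w + m w s"
      using finA by (simp add: deg_insert A_def)
    moreover have "q w = p w + int (m w s)"
      using w UV \<open>v \<notin> U\<close> unfolding q_def plus_shift_def by auto
    ultimately show "int (deg m A w) < p w" using U w unfolding blocking_set_def by force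
  qed (use UV in \<open>auto simp: A_def\<close>)
  ultimately have "decomposable V s m p A U" unfolding decomposable_def by blast
  moreover have "A \<noteq> {}" using v(1) \<open>v \<notin> U\<close> unfolding A_def by auto
  moreover have "A \<inter> U = {}" "A \<union> U = V - {s}" using UV unfolding A_def by auto
  ultimately show thesis using \<open>U \<noteq> {}\<close> that by blast
qed

theorem corollary2p12:
  fixes V :: "'a set" and s :: 'a and mult :: "'a \<Rightarrow> 'a \<Rightarrow> nat" and p :: "'a \<Rightarrow> int"
  assumes "rooted_graph V s mult"
    and "connected_graph V mult"
    and "is_PF V s mult p"
  shows "prime_PF V s mult p \<longleftrightarrow>
           (\<forall>v\<in>VM V s mult p. is_PF V s mult (plus_shift V s mult p v))"
proof -
  have V: "finite V" "s \<in> V" using assms(1) unfolding rooted_graph_def by auto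
  show ?thesis
  proof
    assume "prime_PF V s mult p"
    then show "\<forall>v\<in>VM V s mult p. is_PF V s mult (plus_shift V s mult p v)"
      using decomposable_if_plus_shift_not_PF[OF V assms(3)]
      unfolding prime_PF_def by metis
  next
    assume "\<forall>v\<in>VM V s mult p. is_PF V s mult (plus_shift V s mult p v)"
    then show "prime_PF V s mult p"
      using plus_shift_not_PF_if_decomposable[OF V]
      unfolding prime_PF_def by metis
  qed
qed

end
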